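(* Let $T$ be a tree with at least $3$ vertices. Then the function $v\mapsto f_{T,v}(v)$ is not constant on $V(T)$.
   Context: For a tree $T$ rooted at $v$, the values $f_{T,v}(w)$, $w\in V(T)$, are defined recursively: if $w$ has no children (no descendants) in the rooted tree, $f_{T,v}(w)=0$; otherwise let $u_0,\dots,u_k$ be the children of $w$, let $T_i$ be the subtree consisting of $u_i$ and all its descendants, rooted at $u_i$, and order them so that $c_i:=f_{T_i,u_i}(u_i)$ satisfy $c_0\ge c_1\ge\cdots\ge c_k$; then $f_{T,v}(w)=\max_{0\le i\le k}(i+c_i)$. *)

theory Defs
  imports Main "HOL-Library.Multiset"
begin

definition simple_graph :: "'a set \<Rightarrow> ('a \<Rightarrow> 'a \<Rightarrow> bool) \<Rightarrow> bool" where
  "simple_graph V E \<longleftrightarrow> finite V \<and> (\<forall>x y. E x y \<longrightarrow> E y x) \<and> (\<forall>x. \<not> E x x)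
     \<and> (\<forall>x y. E x y \<longrightarrow> x \<in> V \<and> y \<in> V)"

definition connected_graph :: "'a set \<Rightarrow> ('a \<Rightarrow> 'a \<Rightarrow> bool) \<Rightarrow> bool" where
  "connected_graph V E \<longleftrightarrow> V \<noteq> {} \<and> (\<forall>x\<in>V. \<forall>y\<in>V. E\<^sup>*\<^sup>* x y)"

definition is_cycle :: "('a \<Rightarrow> 'a \<Rightarrow> bool) \<Rightarrow> 'a list \<Rightarrow> bool" where
  "is_cycle E cs \<longleftrightarrow> length cs \<ge> 3 \<and> distinct cs
     \<and> (\<forall>i. Suc i < length cs \<longrightarrow> E (cs ! i) (cs ! Suc i))
     \<and> E (last cs) (hd cs)"

definition is_tree :: "'a set \<Rightarrow> ('a \<Rightarrow> 'a \<Rightarrow> bool) \<Rightarrow> bool" where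
  "is_tree V E \<longleftrightarrow> simple_graph V E \<and> connected_graph V E \<and> (\<nexists>cs. is_cycle E cs)"

definition fcomb :: "nat multiset \<Rightarrow> nat" where
  "fcomb M = (let xs = rev (sorted_list_of_multiset M) in
     if xs = [] then 0 else Max ((\<lambda>i. i + xs ! i) ` {..<length xs}))"

text \<open>fval E p w c: in the tree, the subtree hanging at w away from its parent p
(p = None if w is the root) has value c = f_{T_w,w}(w).  The children of w are
its neighbours other than the parent.\<close>

inductive fval :: "('a \<Rightarrow> 'a \<Rightarrow> bool) \<Rightarrow> 'a option \<Rightarrow> 'a \<Rightarrow> nat \<Rightarrow> bool" for E where
  "\<lbrakk> C = {u. E w u \<and> p \<noteq> Some u}; finite C;
     \<forall>u\<in>C. fval E (Some w) u (g u) \<rbrakk>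
   \<Longrightarrow> fval E p w (fcomb (image_mset g (mset_set C)))"

definition froot :: "('a \<Rightarrow> 'a \<Rightarrow> bool) \<Rightarrow> 'a \<Rightarrow> nat" where
  "froot E v = (THE c. fval E None v c)"

end

theory Submission
  imports Defs
begin

text \<open>
  Suppose every vertex has the same root value c. For an edge pq, the value at q of the branch
  of T - pq containing q is computed from the values of all other branches at q, and the
  root value at q combines all of them. A vertex of degree at least 2 forces c \<ge> 1, and then
  the two branches of an edge cannot both have value c, so some edge p \<rightarrow> q has a light tail:
  the branch at p seen from q is worth less than c. As this value lies below c, the combination
  of all branch values at q, a short multiset argument yields another neighbour r of q whose
  branch value can be removed with the combination dropping below c, i.e. q \<rightarrow> r has a light
  tail as well. Iterating yields an infinite non-backtracking walk, which a
  finite tree does not admit.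
\<close>

definition fcomb_list :: "nat list \<Rightarrow> nat" where
  "fcomb_list xs = (if xs = [] then 0 else Max ((\<lambda>i. i + xs ! i) ` {..<length xs}))"

lemma fcomb_eq_fcomb_list: "fcomb M = fcomb_list (rev (sorted_list_of_multiset M))"
  unfolding fcomb_def fcomb_list_def Let_def by simp

lemma fcomb_list_singleton: "fcomb_list [x] = x"
  by (simp add: fcomb_list_def lessThan_Suc)

lemma fcomb_list_Cons:
  assumes "xs \<noteq> []"
  shows "fcomb_list (x # xs) = max x (fcomb_list xs + 1)"
proof -
  let ?S = "(\<lambda>i. i + xs ! i) ` {..<length xs}"
  have "(\<lambda>i. i + (x # xs) ! i) ` {..<length (x # xs)} = insert x ((\<lambda>y. y + 1) ` ?S)"
    by (auto simp: lessThan_Suc_eq_insert_0 image_image)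
  moreover have "Max ((\<lambda>y. y + 1) ` ?S) = Max ?S + 1"
    using assms by (intro mono_Max_commute[symmetric]) (auto simp: mono_def)
  moreover have "finite ?S" "?S \<noteq> {}"
    using assms by auto
  ultimately show ?thesis
    using assms by (simp add: fcomb_list_def)
qed

lemma fcomb_empty [simp]: "fcomb {#} = 0"
  by (simp add: fcomb_def)

lemma fcomb_add_mset_max:
  assumes "\<forall>y\<in>#R. y \<le> x"
  shows "fcomb (add_mset x R) = (if R = {#} then x else max x (fcomb R + 1))"
proof -
  have "sorted_list_of_multiset (add_mset x R) = sort (sorted_list_of_multiset R @ [x])"
    by (metis mset_append mset_sorted_list_of_multiset add_mset_add_single
        sorted_list_of_multiset_mset mset.simps union_code)
  also have "\<dots> = sorted_list_of_multiset R @ [x]"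
    using assms by (intro sorted_sort_id) (auto simp: sorted_append)
  finally have "rev (sorted_list_of_multiset (add_mset x R)) = x # rev (sorted_list_of_multiset R)"
    by simp
  moreover have "R \<noteq> {#} \<Longrightarrow> rev (sorted_list_of_multiset R) \<noteq> []"
    by (metis Nil_is_rev_conv mset.simps(1) mset_sorted_list_of_multiset)
  ultimately show ?thesis
    by (simp add: fcomb_eq_fcomb_list fcomb_list_Cons fcomb_list_singleton)
qed

lemma length_sorted_list_of_multiset: "length (sorted_list_of_multiset M) = size M"
  by (metis mset_sorted_list_of_multiset size_mset)

lemma index_plus_nth_le_fcomb:
  assumes "i < size M"
  shows "i + rev (sorted_list_of_multiset M) ! i \<le> fcomb M"
proof -
  have "i < length (rev (sorted_list_of_multiset M))"
    using assms by (simp add: length_sorted_list_of_multiset)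
  then show ?thesis
    unfolding fcomb_eq_fcomb_list fcomb_list_def by (auto intro!: Max_ge)
qed

lemma member_le_fcomb:
  assumes "x \<in># M"
  shows "x \<le> fcomb M"
proof -
  have "x \<in> set (rev (sorted_list_of_multiset M))"
    using assms by simp
  then obtain i where "i < size M" "rev (sorted_list_of_multiset M) ! i = x"
    by (metis in_set_conv_nth length_rev length_sorted_list_of_multiset)
  with index_plus_nth_le_fcomb show ?thesis
    by fastforce
qed

lemma one_le_fcomb:
  assumes "2 \<le> size M"
  shows "1 \<le> fcomb M"
  using index_plus_nth_le_fcomb[of 1 M] assms by simp

lemma fcomb_diff_Max_less:
  assumes "0 < fcomb M"
  shows "fcomb (M - {#Max_mset M#}) < fcomb M"
proof -
  let ?R = "M - {#Max_mset M#}"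
  have "M \<noteq> {#}"
    using assms by auto
  then have "M = add_mset (Max_mset M) ?R"
    by simp
  moreover have "\<forall>y\<in>#?R. y \<le> Max_mset M"
    by (meson Max_ge finite_set_mset in_diffD)
  ultimately have "fcomb M = (if ?R = {#} then Max_mset M else max (Max_mset M) (fcomb ?R + 1))"
    by (metis fcomb_add_mset_max)
  with assms show ?thesis
    by (cases "?R = {#}") auto
qed

lemma fcomb_add_mset_fcomb:
  assumes "A \<noteq> {#}"
  shows "fcomb (add_mset (fcomb A) A) = fcomb A + 1"
  using assms by (simp add: fcomb_add_mset_max member_le_fcomb)

text \<open>
  If the maximum of N can be removed without touching e, that lowers the value. Otherwise e is
  the strict maximum, the value of N is one more than that of the rest, and removing the
  maximum of the rest lowers it.
\<close>

lemma exists_fcomb_diff_less: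
  assumes e: "e \<in># N" and e_less: "e < fcomb N"
  shows "\<exists>x\<in># N - {#e#}. fcomb (N - {#x#}) < fcomb N"
proof (cases "Max_mset N \<in># N - {#e#}")
  case True
  moreover have "fcomb (N - {#Max_mset N#}) < fcomb N"
    using e_less by (intro fcomb_diff_Max_less) simp
  ultimately show ?thesis
    by blast
next
  case False
  let ?R = "N - {#e#}"
  have N: "N = add_mset e ?R"
    using e by simp
  have "Max_mset N \<in># N"
    using e by (metis Max_in empty_iff finite_set_mset)
  then have Max_eq: "Max_mset N = e"
    using False N by (metis insert_iff set_mset_add_mset_insert)
  have R_less: "\<forall>y\<in>#?R. y < e"
    using False Max_eq by (metis Max_ge finite_set_mset in_diffD le_neq_implies_less)
  have "?R \<noteq> {#}"
    using e_less N fcomb_add_mset_max[of "{#}" e] by force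
  with N R_less e_less have fcomb_N: "fcomb N = fcomb ?R + 1"
    by (metis fcomb_add_mset_max less_imp_le max_def not_le)
  let ?x = "Max_mset ?R"
  have x: "?x \<in># ?R"
    using \<open>?R \<noteq> {#}\<close> by simp
  have "?x < e"
    using R_less x by blast
  then have "fcomb (?R - {#?x#}) < fcomb ?R"
    using fcomb_N e_less by (intro fcomb_diff_Max_less) linarith
  moreover have "N - {#?x#} = add_mset e (?R - {#?x#})"
    using N x by (metis add_mset_diff_bothsides diff_union_swap2 insert_DiffM)
  moreover have "\<forall>y\<in>#?R - {#?x#}. y \<le> e"
    using R_less by (meson in_diffD less_imp_le)
  ultimately have "fcomb (N - {#?x#}) < fcomb N"
    using e_less fcomb_N by (simp add: fcomb_add_mset_max)
  with x show ?thesis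
    by blast
qed

lemma is_tree_simple_graph: "is_tree V E \<Longrightarrow> simple_graph V E"
  unfolding is_tree_def by blast

lemma simple_graph_sym: "simple_graph V E \<Longrightarrow> E p q \<Longrightarrow> E q p"
  unfolding simple_graph_def by blast

lemma finite_neighbours:
  assumes "simple_graph V E"
  shows "finite {u. E w u}"
proof (rule finite_subset)
  show "{u. E w u} \<subseteq> V" "finite V"
    using assms unfolding simple_graph_def by blast+
qed

lemma nonbacktracking_walk_segment_is_cycle:
  assumes walk: "\<And>k. E (f k) (f (Suc k))" and nonback: "\<And>k. f (Suc (Suc k)) \<noteq> f k"
    and irrefl: "\<And>x. \<not> E x x"
    and "i < j" and "f i = f j" and "inj_on f {i..<j}"
  shows "is_cycle E (map f [i..<j])"
  unfolding is_cycle_def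
proof (intro conjI allI impI)
  have "j \<noteq> Suc i"
    using assms(5) irrefl walk by metis
  moreover have "j \<noteq> Suc (Suc i)"
    using assms(5) nonback by metis
  ultimately show "3 \<le> length (map f [i..<j])"
    using \<open>i < j\<close> by simp
  show "distinct (map f [i..<j])"
    using assms(6) by (simp add: distinct_map)
  show "E (map f [i..<j] ! k) (map f [i..<j] ! Suc k)" if "Suc k < length (map f [i..<j])" for k
    using that walk by simp
  have "E (f (j - 1)) (f j)"
    using walk[of "j - 1"] \<open>i < j\<close> by simp
  then show "E (last (map f [i..<j])) (hd (map f [i..<j]))"
    using \<open>i < j\<close> \<open>f i = f j\<close> by (simp add: last_map hd_map)
qed

lemma tree_no_nonbacktracking_walk:
  assumes "is_tree V E"
  shows "\<nexists>f. \<forall>i. E (f i) (f (Suc i)) \<and> f (Suc (Suc i)) \<noteq> f i"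
proof
  assume "\<exists>f. \<forall>i. E (f i) (f (Suc i)) \<and> f (Suc (Suc i)) \<noteq> f i"
  then obtain f where walk: "\<And>i. E (f i) (f (Suc i))" and nonback: "\<And>i. f (Suc (Suc i)) \<noteq> f i"
    by blast
  have finV: "finite V" and irrefl: "\<And>x. \<not> E x x" and inV: "\<And>x y. E x y \<Longrightarrow> x \<in> V"
    and acyclic: "\<nexists>cs. is_cycle E cs"
    using assms unfolding is_tree_def simple_graph_def by auto
  have "\<not> inj_on f {..card V}"
  proof
    assume "inj_on f {..card V}"
    then have "card (f ` {..card V}) = Suc (card V)"
      by (simp add: card_image)
    moreover have "card (f ` {..card V}) \<le> card V"
      using finV inV walk by (intro card_mono) blast+
    ultimately show False
      by simp
  qed
  then have "\<exists>j. \<exists>i<j. f i = f j"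
    unfolding inj_on_def by (metis linorder_neqE_nat)
  then obtain j where repeat: "\<exists>i<j. f i = f j" and first: "\<And>j'. j' < j \<Longrightarrow> \<not> (\<exists>i<j'. f i = f j')"
    using exists_least_iff[of "\<lambda>j. \<exists>i<j. f i = f j"] by blast
  then obtain i where "i < j" "f i = f j"
    by blast
  moreover have "inj_on f {i..<j}"
    using first by (intro inj_onI) (metis atLeastLessThan_iff linorder_neqE_nat)
  ultimately have "is_cycle E (map f [i..<j])"
    using nonbacktracking_walk_segment_is_cycle walk nonback irrefl by blast
  with acyclic show False
    by blast
qed

lemma tree_no_nonbacktracking_successor:
  assumes "is_tree V E" and "W p\<^sub>0 q\<^sub>0" and "\<And>p q. W p q \<Longrightarrow> E p q"
    and "\<And>p q. W p q \<Longrightarrow> \<exists>r. W q r \<and> r \<noteq> p"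
  shows False
proof -
  obtain next_vertex where next_vertex: "\<And>p q. W p q \<Longrightarrow> W q (next_vertex p q) \<and> next_vertex p q \<noteq> p"
    using assms(4) by metis
  define s where "s n = ((\<lambda>(p, q). (q, next_vertex p q)) ^^ n) (p\<^sub>0, q\<^sub>0)" for n
  have s_Suc: "s (Suc n) = (snd (s n), next_vertex (fst (s n)) (snd (s n)))" for n
    by (simp add: s_def case_prod_beta)
  have W_s: "W (fst (s n)) (snd (s n))" for n
  proof (induction n)
    case 0
    then show ?case
      using assms(2) by (simp add: s_def)
  next
    case (Suc n)
    then show ?case
      using next_vertex by (simp add: s_Suc)
  qed
  have "\<forall>i. E (fst (s i)) (fst (s (Suc i))) \<and> fst (s (Suc (Suc i))) \<noteq> fst (s i)"
    using W_s assms(3) next_vertex by (simp add: s_Suc)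
  then have "\<exists>f. \<forall>i. E (f i) (f (Suc i)) \<and> f (Suc (Suc i)) \<noteq> f i"
    by (intro exI[of _ "\<lambda>i. fst (s i)"])
  with tree_no_nonbacktracking_walk[OF assms(1)] show False
    by blast
qed

lemma fval_unique: "fval E p w a \<Longrightarrow> fval E p w b \<Longrightarrow> a = b"
proof (induction arbitrary: b rule: fval.induct)
  case (1 C w p g)
  from "1.prems" obtain g' where b: "b = fcomb (image_mset g' (mset_set C))"
    and g': "\<forall>u\<in>C. fval E (Some w) u (g' u)"
    by cases (simp add: "1.hyps"(1))
  have "image_mset g (mset_set C) = image_mset g' (mset_set C)"
    using "1.IH" "1.hyps"(2) g' by (intro image_mset_cong) auto
  with b show ?case
    by simp
qed

lemma fval_exists:
  assumes tree: "is_tree V E"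
  shows "\<exists>c. fval E p w c"
proof -
  \<comment> \<open>A descending chain of the child relation R is an infinite non-backtracking walk.\<close>
  define R where "R = {((Some w, u), (p, w)) | p w u. E w u \<and> p \<noteq> Some u}"
  have "wf R"
  proof (rule ccontr)
    assume "\<not> wf R"
    then obtain h where h: "\<And>i. (h (Suc i), h i) \<in> R"
      unfolding wf_iff_no_infinite_down_chain by blast
    have "E (snd (h i)) (snd (h (Suc i))) \<and> snd (h (Suc (Suc i))) \<noteq> snd (h i)" for i
    proof -
      from h[of i] have "E (snd (h i)) (snd (h (Suc i)))" "fst (h (Suc i)) = Some (snd (h i))"
        unfolding R_def by auto
      moreover from h[of "Suc i"] have "fst (h (Suc i)) \<noteq> Some (snd (h (Suc (Suc i))))"
        unfolding R_def by auto
      ultimately show ?thesis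
        by auto
    qed
    then have "\<exists>f. \<forall>i. E (f i) (f (Suc i)) \<and> f (Suc (Suc i)) \<noteq> f i"
      by (intro exI[of _ "\<lambda>i. snd (h i)"]) blast
    with tree_no_nonbacktracking_walk[OF tree] show False
      by blast
  qed
  have "\<exists>c. fval E (fst x) (snd x) c" for x
  proof (induction x rule: wf_induct[OF \<open>wf R\<close>])
    case (1 x)
    obtain p w where x: "x = (p, w)"
      by fastforce
    define C where "C = {u. E w u \<and> p \<noteq> Some u}"
    have "\<forall>u\<in>C. \<exists>c. fval E (Some w) u c"
      using 1 unfolding x C_def R_def by fastforce
    then have "\<forall>u\<in>C. fval E (Some w) u (SOME c. fval E (Some w) u c)"
      by (metis someI_ex)
    moreover have "finite C"
      using finite_neighbours[OF is_tree_simple_graph[OF tree], of w] unfolding C_def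
      by (rule rev_finite_subset) blast
    ultimately have "fval E p w (fcomb (image_mset (\<lambda>u. SOME c. fval E (Some w) u c) (mset_set C)))"
      by (intro fval.intros[where E = E and C = C and w = w and p = p, OF C_def]) auto
    then show ?case
      unfolding x by auto
  qed
  then show ?thesis
    by (metis fst_conv snd_conv)
qed

text \<open>
  For an edge pw, subtree_val E (Some p) w is the value f at w of the component of T - pw
  containing w, rooted at w.
\<close>

definition subtree_val :: "('a \<Rightarrow> 'a \<Rightarrow> bool) \<Rightarrow> 'a option \<Rightarrow> 'a \<Rightarrow> nat" where
  "subtree_val E p w = (THE c. fval E p w c)"

lemma fval_subtree_val:
  assumes "is_tree V E"
  shows "fval E p w (subtree_val E p w)"
proof -
  obtain c where "fval E p w c"
    using fval_exists[OF assms] by blast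
  then show ?thesis
    unfolding subtree_val_def by (metis theI fval_unique)
qed

lemma froot_eq_subtree_val: "froot E v = subtree_val E None v"
  unfolding froot_def subtree_val_def ..

lemma subtree_val_rec:
  assumes tree: "is_tree V E"
  shows "subtree_val E p w = fcomb (image_mset (subtree_val E (Some w)) (mset_set {u. E w u \<and> p \<noteq> Some u}))"
proof -
  define C where "C = {u. E w u \<and> p \<noteq> Some u}"
  have "finite C"
    using finite_neighbours[OF is_tree_simple_graph[OF tree], of w] unfolding C_def
    by (rule rev_finite_subset) blast
  moreover have "\<forall>u\<in>C. fval E (Some w) u (subtree_val E (Some w) u)"
    using fval_subtree_val[OF tree] by blast
  ultimately have "fval E p w (fcomb (image_mset (subtree_val E (Some w)) (mset_set C)))"
    by (intro fval.intros[where E = E and C = C and w = w and p = p, OF C_def]) auto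
  then show ?thesis
    unfolding C_def by (rule fval_unique[OF fval_subtree_val[OF tree]])
qed

definition branch_vals :: "('a \<Rightarrow> 'a \<Rightarrow> bool) \<Rightarrow> 'a \<Rightarrow> nat multiset" where
  "branch_vals E q = image_mset (subtree_val E (Some q)) (mset_set {u. E q u})"

lemma froot_eq_fcomb_branch_vals:
  assumes "is_tree V E"
  shows "froot E q = fcomb (branch_vals E q)"
proof -
  have "froot E q = fcomb (image_mset (subtree_val E (Some q)) (mset_set {u. E q u \<and> None \<noteq> Some u}))"
    unfolding froot_eq_subtree_val by (rule subtree_val_rec[OF assms])
  then show ?thesis
    unfolding branch_vals_def by simp
qed

lemma branch_vals_diff:
  assumes tree: "is_tree V E" and "E q p"
  shows "branch_vals E q - {#subtree_val E (Some q) p#}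
    = image_mset (subtree_val E (Some q)) (mset_set ({u. E q u} - {p}))"
    and "subtree_val E (Some q) p \<in># branch_vals E q"
proof -
  have "finite {u. E q u}"
    using is_tree_simple_graph[OF tree] by (rule finite_neighbours)
  then have "mset_set {u. E q u} = add_mset p (mset_set ({u. E q u} - {p}))"
    using \<open>E q p\<close> by (simp add: mset_set.remove)
  then show "branch_vals E q - {#subtree_val E (Some q) p#}
      = image_mset (subtree_val E (Some q)) (mset_set ({u. E q u} - {p}))"
    and "subtree_val E (Some q) p \<in># branch_vals E q"
    unfolding branch_vals_def by simp_all
qed

lemma subtree_val_edge:
  assumes tree: "is_tree V E" and "E q p"
  shows "subtree_val E (Some p) q = fcomb (branch_vals E q - {#subtree_val E (Some q) p#})"
proof -
  have "subtree_val E (Some p) q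
      = fcomb (image_mset (subtree_val E (Some q)) (mset_set {u. E q u \<and> Some p \<noteq> Some u}))"
    by (rule subtree_val_rec[OF tree])
  also have "{u. E q u \<and> Some p \<noteq> Some u} = {u. E q u} - {p}"
    by auto
  finally show ?thesis
    unfolding branch_vals_diff(1)[OF assms] .
qed

lemma connected_exists_degree_ge_2:
  assumes "simple_graph V E" and "connected_graph V E" and "3 \<le> card V"
  shows "\<exists>q\<in>V. 2 \<le> card {u. E q u}"
proof (rule ccontr)
  assume "\<not> ?thesis"
  then have deg: "card {u. E q u} \<le> 1" if "q \<in> V" for q
    using that by fastforce
  have sym: "\<And>x y. E x y \<Longrightarrow> E y x" and inV: "\<And>x y. E x y \<Longrightarrow> y \<in> V"
    and conn: "\<And>x y. x \<in> V \<Longrightarrow> y \<in> V \<Longrightarrow> E\<^sup>*\<^sup>* x y"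
    using assms(1,2) unfolding simple_graph_def connected_graph_def by blast+
  obtain x where x: "x \<in> V"
    using assms(3) by fastforce
  have "y = x \<or> E x y" if "E\<^sup>*\<^sup>* x y" for y
    using that
  proof (induction rule: rtranclp_induct)
    case (step y z)
    show ?case
    proof (cases "y = x")
      case False
      then have "E y x" "E y z" "y \<in> V"
        using step sym inV by blast+
      then have "z = x"
        using deg[of y] finite_neighbours[OF assms(1), of y] by (metis card_le_Suc0_iff_eq One_nat_def mem_Collect_eq)
      then show ?thesis
        by simp
    qed (use step in simp)
  qed simp
  then have "V \<subseteq> insert x {u. E x u}"
    using conn[OF x] by blast
  then have "card V \<le> card (insert x {u. E x u})"
    using finite_neighbours[OF assms(1)] by (intro card_mono) auto
  also have "\<dots> \<le> 2"
    using deg[OF x] finite_neighbours[OF assms(1)] by (simp add: card_insert_if)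
  finally show False
    using assms(3) by simp
qed

context
  fixes V :: "'a set" and E :: "'a \<Rightarrow> 'a \<Rightarrow> bool" and c :: nat
  assumes tree: "is_tree V E" and froot_const: "\<And>v. v \<in> V \<Longrightarrow> froot E v = c"
begin

lemma fcomb_branch_vals_const:
  assumes "E q p"
  shows "fcomb (branch_vals E q) = c"
proof -
  have "q \<in> V"
    using is_tree_simple_graph[OF tree] assms unfolding simple_graph_def by blast
  then show ?thesis
    using froot_const froot_eq_fcomb_branch_vals[OF tree] by simp
qed

lemma edge_has_light_side:
  assumes "1 \<le> c" and "E p q"
  shows "subtree_val E (Some q) p < c \<or> subtree_val E (Some p) q < c"
proof (rule ccontr)
  \<comment> \<open>Otherwise q sees the value fcomb A next to the rest A of its branch values.\<close>
  have "E q p"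
    using simple_graph_sym[OF is_tree_simple_graph[OF tree] assms(2)] .
  let ?A = "branch_vals E q - {#subtree_val E (Some q) p#}"
  assume "\<not> ?thesis"
  moreover have "subtree_val E (Some q) p \<le> c" "subtree_val E (Some p) q \<le> c"
    using fcomb_branch_vals_const member_le_fcomb branch_vals_diff(2) tree \<open>E q p\<close> assms(2)
    by metis+
  ultimately have heavy: "subtree_val E (Some q) p = c" "subtree_val E (Some p) q = c"
    by simp_all
  then have "fcomb ?A = c"
    using subtree_val_edge[OF tree \<open>E q p\<close>] by simp
  then have "?A \<noteq> {#}"
    using assms(1) by auto
  have "branch_vals E q = add_mset (fcomb ?A) ?A"
    using branch_vals_diff(2)[OF tree \<open>E q p\<close>] heavy \<open>fcomb ?A = c\<close> by simp
  then have "c = c + 1"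
    using fcomb_branch_vals_const[OF \<open>E q p\<close>] fcomb_add_mset_fcomb[OF \<open>?A \<noteq> {#}\<close>]
      \<open>fcomb ?A = c\<close> by simp
  then show False
    by simp
qed

lemma light_branch_continues:
  assumes "E p q" and "subtree_val E (Some q) p < c"
  shows "\<exists>r. (E q r \<and> subtree_val E (Some r) q < c) \<and> r \<noteq> p"
proof -
  have "E q p"
    using simple_graph_sym[OF is_tree_simple_graph[OF tree] assms(1)] .
  obtain x where x: "x \<in># branch_vals E q - {#subtree_val E (Some q) p#}"
    and drop: "fcomb (branch_vals E q - {#x#}) < c"
    using exists_fcomb_diff_less[OF branch_vals_diff(2)[OF tree \<open>E q p\<close>]]
      assms(2) fcomb_branch_vals_const[OF \<open>E q p\<close>] by auto
  then obtain r where r: "E q r" "r \<noteq> p" "x = subtree_val E (Some q) r"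
    unfolding branch_vals_diff(1)[OF tree \<open>E q p\<close>]
    using finite_neighbours[OF is_tree_simple_graph[OF tree], of q] by auto
  then have "subtree_val E (Some r) q < c"
    using subtree_val_edge[OF tree \<open>E q r\<close>] drop by simp
  with r show ?thesis
    by blast
qed

lemma exists_light_edge:
  assumes "3 \<le> card V"
  shows "\<exists>p q. E p q \<and> subtree_val E (Some q) p < c"
proof -
  obtain q where "q \<in> V" and deg: "2 \<le> card {u. E q u}"
    using connected_exists_degree_ge_2[OF is_tree_simple_graph[OF tree] _ assms] tree
    unfolding is_tree_def by blast
  then have "1 \<le> c"
    using one_le_fcomb[of "branch_vals E q"] froot_const froot_eq_fcomb_branch_vals[OF tree]
    by (simp add: branch_vals_def)
  obtain p where "E q p"
    using deg by (metis Collect_empty_eq card.empty not_numeral_le_zero)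
  then show ?thesis
    using edge_has_light_side[OF \<open>1 \<le> c\<close>] simple_graph_sym[OF is_tree_simple_graph[OF tree]] by blast
qed

end

theorem proposition4p4:
  fixes V :: "'a set" and E :: "'a \<Rightarrow> 'a \<Rightarrow> bool"
  assumes "is_tree V E" and "card V \<ge> 3"
  shows "\<not> (\<exists>c. \<forall>v\<in>V. froot E v = c)"
proof
  assume "\<exists>c. \<forall>v\<in>V. froot E v = c"
  then obtain c where const: "\<And>v. v \<in> V \<Longrightarrow> froot E v = c"
    by blast
  let ?light = "\<lambda>p q. E p q \<and> subtree_val E (Some q) p < c"
  obtain p q where "?light p q"
    using exists_light_edge[OF assms(1) const assms(2)] by blast
  then show False
    using tree_no_nonbacktracking_successor[OF assms(1), of ?light]
      light_branch_continues[OF assms(1) const] by blast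
qed

end
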